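(* Let $A$ be a linear Nakayama algebra and $M$ an indecomposable $A$-module with $\operatorname{char}M=(z_1,\dots,z_m)$. Then every non-zero subfactor $X$ of $M$ satisfies $\operatorname{pd}X\le1+\max_i z_i$.
   Context: A linear Nakayama algebra is a basic $kQ/I$ ($k$ a field) with $Q$ a linearly oriented path; it has finite global dimension; modules are finitely generated left modules and indecomposables are uniserial. An indecomposable module is even/odd according to the parity of its projective dimension. For indecomposable $M$ with composition factors $F_1=\operatorname{soc}M,\dots,F_m=\operatorname{top}M$ (from bottom to top), $\operatorname{char}M=(z_1,\dots,z_m)$ with $z_i=\operatorname{pd}F_i$ if $F_i$ is odd and $z_i=\operatorname{pd}M$ if $F_i$ is even. A subfactor of $M$ is a module $M_2/M_1$ with $M_1\subseteq M_2\subseteq M$ submodules. *)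

theory Defs
  imports Main
begin

(* Combinatorial model of a linear Nakayama algebra A = kQ/I, Q : 0 -> 1 -> ... -> n-1,
   via its Kupisch series c.  P_i = M(i, c i) has composition factors
   S_i (top), S_(i+1), ..., S_(i + c i - 1) (socle).
   Indecomposable modules (all uniserial) are M(i,l) with i < n, 1 <= l <= c i:
   top S_i, composition factors S_i, ..., S_(i+l-1), socle S_(i+l-1). *)

definition kupisch :: "nat \<Rightarrow> (nat \<Rightarrow> nat) \<Rightarrow> bool" where
  "kupisch n c \<longleftrightarrow> n \<ge> 1 \<and> (\<forall>i<n. c i \<ge> 1) \<and> c (n - 1) = 1
     \<and> (\<forall>i. i + 1 < n \<longrightarrow> c i \<le> c (i + 1) + 1)"

definition indec :: "nat \<Rightarrow> (nat \<Rightarrow> nat) \<Rightarrow> nat \<times> nat \<Rightarrow> bool" where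
  "indec n c M \<longleftrightarrow> fst M < n \<and> 1 \<le> snd M \<and> snd M \<le> c (fst M)"

(* Projective dimension of M(i,l): projective iff l = c i; otherwise the syzygy is
   M(i+l, c i - l) (kernel of the projective cover P_i -> M(i,l)). *)
function pd :: "nat \<Rightarrow> (nat \<Rightarrow> nat) \<Rightarrow> nat \<Rightarrow> nat \<Rightarrow> nat" where
  "pd n c i l = (if n \<le> i \<or> l = 0 \<or> c i \<le> l then 0
                 else Suc (pd n c (i + l) (c i - l)))"
  by pat_completeness auto
termination
  by (relation "measure (\<lambda>(n, c, i, l). n - i)") auto

definition pdM :: "nat \<Rightarrow> (nat \<Rightarrow> nat) \<Rightarrow> nat \<times> nat \<Rightarrow> nat" where
  "pdM n c M = pd n c (fst M) (snd M)"

(* char M = (z_1,...,z_m), listed from the socle F_1 = S_(i+l-1) up to the top F_m = S_i;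
   simple S_j = M(j,1). *)
definition charM :: "nat \<Rightarrow> (nat \<Rightarrow> nat) \<Rightarrow> nat \<times> nat \<Rightarrow> nat list" where
  "charM n c M = map (\<lambda>j. if odd (pd n c j 1) then pd n c j 1 else pdM n c M)
                    (rev [fst M..<fst M + snd M])"

(* Submodules of the uniserial M(i,l) are M(i+l-k, k), 0 <= k <= l (the bottom k factors;
   k = 0 is the zero module).  A subfactor M2/M1 with M1 = M(i+l-k1,k1) \<subseteq> M2 = M(i+l-k2,k2)
   is M(i+l-k2, k2-k1); it is non-zero iff k1 < k2. *)
definition nonzero_subfactor :: "nat \<times> nat \<Rightarrow> nat \<times> nat \<Rightarrow> bool" where
  "nonzero_subfactor X M \<longleftrightarrow> (\<exists>k1 k2. k1 < k2 \<and> k2 \<le> snd M \<and>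
      X = (fst M + snd M - k2, k2 - k1))"

end

theory Submission
  imports Defs
begin

(* Identify M(i,l) with the interval [i, i+l) of vertices; the projective P_x is [x, g x)
   with g x = x + c x, and the syzygy of [x, y) is [y, g x).  Let E x y be the number of
   iterations of g after which x and y coincide.  E is an ultrametric on the line,
   E x z = max (E x y) (E y z) for x <= y <= z, and unwinding the syzygies gives
   pd [x, y) = min (2 E x y - 1) (2 E y (g x)).  For a subfactor [a, b) of M = [u, v) the
   value E a b is attained at a single composition factor S_j, j in [a, b).  If S_j is odd,
   pd [a, b) <= 2 E a b - 1 = pd S_j.  If S_j is even, the far end E (j+1) (g j) is smaller
   than E a b, which either makes pd M = 2 E v (g u) large enough or locates, by the
   ultrametric inequality, an odd composition factor of M whose projective dimension
   bounds pd [a, b). *)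

declare pd.simps [simp del]

definition char_entry :: "nat \<Rightarrow> (nat \<Rightarrow> nat) \<Rightarrow> nat \<times> nat \<Rightarrow> nat \<Rightarrow> nat" where
  "char_entry n c M j = (if odd (pd n c j 1) then pd n c j 1 else pdM n c M)"

lemma set_charM: "set (charM n c M) = char_entry n c M ` {fst M..<fst M + snd M}"
  by (simp add: charM_def char_entry_def)

lemma char_entry_le_Max_charM:
  "j \<in> {fst M..<fst M + snd M} \<Longrightarrow> char_entry n c M j \<le> Max (set (charM n c M))"
  by (simp add: set_charM)

lemma Suc_min_double:
  fixes A B :: nat
  assumes "1 \<le> A" "1 \<le> B"
  shows "Suc (min (2 * A - 1) (2 * (B - 1))) = min (2 * B - 1) (2 * A)"
  using assms by (auto simp: min_def)

locale nakayama =
  fixes n :: nat and c :: "nat \<Rightarrow> nat"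
  assumes kupisch: "kupisch n c"
begin

lemma c_pos: "i < n \<Longrightarrow> 1 \<le> c i"
  using kupisch unfolding kupisch_def by auto

lemma c_le_Suc: "i + 1 < n \<Longrightarrow> c i \<le> c (i + 1) + 1"
  using kupisch unfolding kupisch_def by auto

lemma add_c_mono: "i \<le> j \<Longrightarrow> j < n \<Longrightarrow> i + c i \<le> j + c j"
proof (induction j)
  case (Suc j)
  then show ?case
    using c_le_Suc[of j] by (cases "i = Suc j") auto
qed simp

lemma add_c_le: "i < n \<Longrightarrow> i + c i \<le> n"
  using add_c_mono[of i "n - 1"] kupisch unfolding kupisch_def by auto

(* P_x occupies the interval [x, proj_end x); the sink n is a fixed point, so that all
   iterates stay in {..n}. *)
definition proj_end :: "nat \<Rightarrow> nat" where
  "proj_end x = (if x < n then x + c x else n)"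

definition merge_time :: "nat \<Rightarrow> nat \<Rightarrow> nat" where
  "merge_time x y = (LEAST r. (proj_end ^^ r) x = (proj_end ^^ r) y)"

lemma proj_end_le: "proj_end x \<le> n"
  using add_c_le by (simp add: proj_end_def)

lemma less_proj_end: "x < n \<Longrightarrow> x < proj_end x"
  using c_pos[of x] by (simp add: proj_end_def)

lemma proj_end_mono: "x \<le> y \<Longrightarrow> proj_end x \<le> proj_end y"
  using add_c_mono[of x y] proj_end_le[of x] by (auto simp: proj_end_def)

lemma funpow_proj_end_mono: "x \<le> y \<Longrightarrow> (proj_end ^^ r) x \<le> (proj_end ^^ r) y"
  by (induction r) (auto simp: proj_end_mono)

lemma funpow_proj_end_le: "x \<le> n \<Longrightarrow> (proj_end ^^ r) x \<le> n"
  by (induction r) (auto simp: proj_end_le)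

lemma funpow_proj_end_ge: "x \<le> n \<Longrightarrow> min n (x + r) \<le> (proj_end ^^ r) x"
proof (induction r)
  case (Suc r)
  show ?case
  proof (cases "(proj_end ^^ r) x < n")
    case True
    then show ?thesis
      using Suc less_proj_end[OF True] by simp
  next
    case False
    then have "(proj_end ^^ r) x = n"
      using funpow_proj_end_le[OF Suc.prems] by (simp add: le_antisym)
    moreover have "proj_end n = n"
      by (simp add: proj_end_def)
    ultimately show ?thesis by simp
  qed
qed simp

lemma funpow_proj_end_n: "x \<le> n \<Longrightarrow> (proj_end ^^ n) x = n"
  using funpow_proj_end_ge[of x n] funpow_proj_end_le[of x n] by simp

lemma merge_time_le_iff:
  assumes "x \<le> n" "y \<le> n"
  shows "merge_time x y \<le> r \<longleftrightarrow> (proj_end ^^ r) x = (proj_end ^^ r) y"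
proof
  have "(proj_end ^^ merge_time x y) x = (proj_end ^^ merge_time x y) y"
    unfolding merge_time_def by (rule LeastI[of _ n]) (simp add: assms funpow_proj_end_n)
  moreover assume "merge_time x y \<le> r"
  then obtain k where "r = k + merge_time x y"
    using le_add_diff_inverse2 by metis
  ultimately show "(proj_end ^^ r) x = (proj_end ^^ r) y"
    by (simp add: funpow_add)
next
  assume "(proj_end ^^ r) x = (proj_end ^^ r) y"
  then show "merge_time x y \<le> r"
    unfolding merge_time_def by (rule Least_le)
qed

lemma merge_time_self [simp]: "merge_time x x = 0"
  unfolding merge_time_def by simp

lemma merge_time_pos: "x \<le> n \<Longrightarrow> y \<le> n \<Longrightarrow> x \<noteq> y \<Longrightarrow> 1 \<le> merge_time x y"
  using merge_time_le_iff[of x y 0] by simp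

lemma merge_time_split:
  assumes "x \<le> y" "y \<le> z" "z \<le> n"
  shows "merge_time x z = max (merge_time x y) (merge_time y z)"
proof -
  have "merge_time x z \<le> r \<longleftrightarrow> max (merge_time x y) (merge_time y z) \<le> r" for r
  proof -
    have "(proj_end ^^ r) x \<le> (proj_end ^^ r) y" "(proj_end ^^ r) y \<le> (proj_end ^^ r) z"
      using assms funpow_proj_end_mono by auto
    then show ?thesis
      using assms merge_time_le_iff by auto
  qed
  then show ?thesis
    by (metis antisym order_refl)
qed

lemma merge_time_subinterval:
  "x \<le> x' \<Longrightarrow> x' \<le> y' \<Longrightarrow> y' \<le> y \<Longrightarrow> y \<le> n \<Longrightarrow> merge_time x' y' \<le> merge_time x y"
  using merge_time_split[of x x' y] merge_time_split[of x' y' y] by simp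

lemma merge_time_proj_end:
  assumes "x \<le> n" "y \<le> n"
  shows "merge_time (proj_end x) (proj_end y) = merge_time x y - 1"
proof -
  have "merge_time (proj_end x) (proj_end y) \<le> r \<longleftrightarrow> merge_time x y \<le> Suc r" for r
    using assms proj_end_le
    by (simp add: merge_time_le_iff funpow_Suc_right del: funpow.simps)
  from this[of "merge_time (proj_end x) (proj_end y)"] this[of "merge_time x y - 1"]
  show ?thesis by linarith
qed

lemma merge_time_attained:
  "x < y \<Longrightarrow> y \<le> n \<Longrightarrow> \<exists>j\<in>{x..<y}. merge_time x y = merge_time j (Suc j)"
proof (induction y)
  case (Suc y)
  show ?case
  proof (cases "x = y")
    case False
    then have "x < y" using Suc.prems by simp
    then obtain j where "j \<in> {x..<y}" "merge_time x y = merge_time j (Suc j)"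
      using Suc by auto
    moreover have "merge_time x (Suc y) = max (merge_time x y) (merge_time y (Suc y))"
      using merge_time_split[of x y "Suc y"] \<open>x < y\<close> Suc.prems by simp
    ultimately show ?thesis
      using \<open>x < y\<close> by (cases "merge_time x y \<le> merge_time y (Suc y)") force+
  qed auto
qed simp

lemma pd_eq_merge_time:
  "x < n \<Longrightarrow> x < y \<Longrightarrow> y \<le> proj_end x \<Longrightarrow>
     pd n c x (y - x) = min (2 * merge_time x y - 1) (2 * merge_time y (proj_end x))"
proof (induction "n - x" arbitrary: x y rule: less_induct)
  case less
  show ?case
  proof (cases "y = proj_end x")
    case True
    then show ?thesis
      using less.prems by (subst pd.simps) (simp add: proj_end_def)
  next
    case False
    let ?g = proj_end
    have gx: "?g x = x + c x" "y < ?g x"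
      using less.prems False by (auto simp: proj_end_def)
    have "y < n"
      using gx proj_end_le[of x] by simp
    have "pd n c x (y - x) = Suc (pd n c y (?g x - y))"
      using less.prems gx by (subst pd.simps) (simp add: add.commute)
    also have "pd n c y (?g x - y) =
        min (2 * merge_time y (?g x) - 1) (2 * merge_time (?g x) (?g y))"
      using less.hyps[of y "?g x"] less.prems \<open>y < n\<close> gx proj_end_mono[of x y] by simp
    also have "merge_time (?g x) (?g y) = merge_time x y - 1"
      using merge_time_proj_end less.prems \<open>y < n\<close> by simp
    finally show ?thesis
      using Suc_min_double[of "merge_time y (?g x)" "merge_time x y"] merge_time_pos[of x y]
        merge_time_pos[of y "?g x"] less.prems \<open>y < n\<close> gx proj_end_le[of x] by simp
  qed
qed

(* By pd_simple, this says that the simple module S_j has odd projective dimension. *)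
definition odd_factor :: "nat \<Rightarrow> bool" where
  "odd_factor j \<longleftrightarrow> merge_time j (Suc j) \<le> merge_time (Suc j) (proj_end j)"

lemma pd_simple:
  "j < n \<Longrightarrow> pd n c j 1 =
     min (2 * merge_time j (Suc j) - 1) (2 * merge_time (Suc j) (proj_end j))"
  using pd_eq_merge_time[of j "Suc j"] less_proj_end[of j] by simp

lemma char_entry_odd_factor:
  assumes "j < n" "odd_factor j"
  shows "char_entry n c M j = 2 * merge_time j (Suc j) - 1"
proof -
  have "1 \<le> merge_time j (Suc j)"
    using merge_time_pos assms less_proj_end[of j] proj_end_le[of j] by simp
  then show ?thesis
    using assms pd_simple[of j] by (simp add: char_entry_def odd_factor_def)
qed

lemma char_entry_even_factor:
  "j < n \<Longrightarrow> \<not> odd_factor j \<Longrightarrow> char_entry n c M j = pdM n c M"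
  using pd_simple[of j] by (simp add: char_entry_def odd_factor_def)

lemma merge_time_far_end:
  assumes "u \<le> a" "a < b" "b \<le> v" "v \<le> proj_end u" "u < n"
  shows "merge_time b (proj_end a) =
    max (merge_time b v) (max (merge_time v (proj_end u)) (merge_time u a - 1))"
proof -
  have "a < n" "proj_end u \<le> proj_end a"
    using assms proj_end_le[of u] proj_end_mono by auto
  then show ?thesis
    using assms merge_time_split[of b v "proj_end a"] merge_time_split[of v "proj_end u" "proj_end a"]
      merge_time_proj_end[of u a] proj_end_le by simp
qed

lemma odd_factor_if_right_ge:
  assumes "u \<le> j" "j < j'" "j' < v" "v \<le> proj_end u" "u < n"
    and "merge_time j (Suc j) \<le> merge_time j' (Suc j')"
  shows "odd_factor j"
proof -
  have "merge_time j' (Suc j') \<le> merge_time (Suc j) v"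
    using assms proj_end_le[of u] by (intro merge_time_subinterval) auto
  then show ?thesis
    using assms merge_time_far_end[of u j "Suc j" v] unfolding odd_factor_def by simp
qed

lemma odd_factor_if_left_greater:
  assumes "u \<le> j'" "j' < j" "j < v" "v \<le> proj_end u" "u < n"
    and "merge_time j (Suc j) < merge_time j' (Suc j')"
  shows "odd_factor j"
proof -
  have "merge_time j' (Suc j') \<le> merge_time u j"
    using assms proj_end_le[of u] by (intro merge_time_subinterval) auto
  then have "merge_time j (Suc j) \<le> merge_time u j - 1"
    using assms(6) by linarith
  then show ?thesis
    using assms merge_time_far_end[of u j "Suc j" v] unfolding odd_factor_def by simp
qed

lemma pd_subinterval_bound_even_factor:
  assumes sub: "u \<le> a" "a < b" "b \<le> v" "v \<le> proj_end u" "u < n"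
    and j1: "j1 \<in> {a..<b}" "merge_time a b = merge_time j1 (Suc j1)" "\<not> odd_factor j1"
  shows "\<exists>j\<in>{u..<v}. pd n c a (b - a) \<le> 1 + char_entry n c (u, v - u) j"
proof -
  let ?E = merge_time and ?W = "merge_time v (proj_end u)" and ?pdX = "pd n c a (b - a)"
  define e where "e = ?E j1 (Suc j1)"
  have "v \<le> n"
    using sub proj_end_le[of u] by simp
  have "?E (Suc j1) (proj_end j1) = max (?E (Suc j1) v) (max ?W (?E u j1 - 1))"
    using merge_time_far_end[of u j1 "Suc j1" v] sub j1 by simp
  then have below: "?E (Suc j1) v < e" "?W < e" "?E u j1 - 1 < e"
    using j1(3) unfolding odd_factor_def e_def by auto
  have "?pdX \<le> 2 * max (?E b v) (max ?W (?E u a - 1))"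
    using pd_eq_merge_time[of a b] merge_time_far_end[of u a b v] sub proj_end_mono[of u a] \<open>v \<le> n\<close>
    by simp
  then consider "?pdX \<le> 2 * ?W" | "?pdX \<le> 2 * ?E b v" | "?pdX \<le> 2 * (?E u a - 1)"
    by (auto simp: max_def split: if_splits)
  then show ?thesis
  proof cases
    case 1
    have "e \<le> ?E u v"
      using merge_time_subinterval[of u j1 "Suc j1" v] sub j1 \<open>v \<le> n\<close> unfolding e_def by simp
    then have "pdM n c (u, v - u) = 2 * ?W"
      using pd_eq_merge_time[of u v] below sub by (simp add: pdM_def)
    then show ?thesis
      using 1 char_entry_even_factor[of j1] j1 sub \<open>v \<le> n\<close> by (intro bexI[of _ j1]) auto
  next
    case 2
    show ?thesis
    proof (cases "b < v")
      case True
      then obtain j where j: "j \<in> {b..<v}" "?E b v = ?E j (Suc j)"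
        using merge_time_attained[of b v] \<open>v \<le> n\<close> by auto
      have "?E b v \<le> ?E (Suc j1) v"
        using merge_time_subinterval[of "Suc j1" b v v] j1 sub \<open>v \<le> n\<close> by simp
      then have "odd_factor j"
        using odd_factor_if_left_greater[of u j1 j v] below j j1 sub unfolding e_def by simp
      then show ?thesis
        using 2 j char_entry_odd_factor[of j] sub \<open>v \<le> n\<close> by (intro bexI[of _ j]) auto
    qed (use 2 j1 sub in \<open>intro bexI[of _ j1], auto\<close>)
  next
    case 3
    show ?thesis
    proof (cases "u < a")
      case True
      then obtain j where j: "j \<in> {u..<a}" "?E u a = ?E j (Suc j)"
        using merge_time_attained[of u a] sub \<open>v \<le> n\<close> by auto
      have "?E u a \<le> ?E u j1"
        using merge_time_subinterval[of u u a j1] j1 sub \<open>v \<le> n\<close> by simp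
      then have "odd_factor j"
        using odd_factor_if_right_ge[of u j j1 v] below j j1 sub unfolding e_def by simp
      then show ?thesis
        using 3 j char_entry_odd_factor[of j] sub \<open>v \<le> n\<close> by (intro bexI[of _ j]) auto
    qed (use 3 j1 sub in \<open>intro bexI[of _ j1], auto\<close>)
  qed
qed

lemma pd_subinterval_bound:
  assumes "u \<le> a" "a < b" "b \<le> v" "v \<le> proj_end u" "u < n"
  shows "\<exists>j\<in>{u..<v}. pd n c a (b - a) \<le> 1 + char_entry n c (u, v - u) j"
proof -
  have "a < n" "b \<le> proj_end a"
    using assms proj_end_le[of u] proj_end_mono[of u a] by auto
  obtain j1 where j1: "j1 \<in> {a..<b}" "merge_time a b = merge_time j1 (Suc j1)"
    using merge_time_attained[of a b] assms proj_end_le[of u] by auto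
  show ?thesis
  proof (cases "odd_factor j1")
    case True
    then have "char_entry n c (u, v - u) j1 = 2 * merge_time a b - 1"
      using char_entry_odd_factor[of j1] j1 assms proj_end_le[of u] by simp
    moreover have "pd n c a (b - a) \<le> 2 * merge_time a b - 1"
      using pd_eq_merge_time \<open>a < n\<close> \<open>b \<le> proj_end a\<close> assms by simp
    ultimately show ?thesis
      using j1 assms by (intro bexI[of _ j1]) auto
  next
    case False
    then show ?thesis
      using pd_subinterval_bound_even_factor j1 assms by blast
  qed
qed

end

theorem proposition4p9:
  fixes n :: nat and c :: "nat \<Rightarrow> nat" and M X :: "nat \<times> nat"
  assumes "kupisch n c"
    and "indec n c M"
    and "nonzero_subfactor X M"
  shows "pdM n c X \<le> 1 + Max (set (charM n c M))"
proof -
  interpret nakayama n c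
    using assms(1) by unfold_locales
  obtain u l where M: "M = (u, l)"
    by fastforce
  obtain k1 k2 where k: "k1 < k2" "k2 \<le> l" "X = (u + l - k2, k2 - k1)"
    using assms(3) M by (auto simp: nonzero_subfactor_def)
  define a b where "a = u + l - k2" and "b = u + l - k1"
  have "u \<le> a" "a < b" "b \<le> u + l" "X = (a, b - a)"
    using k by (auto simp: a_def b_def)
  moreover have "u < n" "u + l \<le> proj_end u"
    using assms(2) M by (auto simp: indec_def proj_end_def)
  ultimately obtain j where "j \<in> {u..<u + l}" "pd n c a (b - a) \<le> 1 + char_entry n c (u, l) j"
    using pd_subinterval_bound[of u a b "u + l"] by auto
  then show ?thesis
    using char_entry_le_Max_charM[of j M n c] M \<open>X = (a, b - a)\<close> by (simp add: pdM_def)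
qed

end
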